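(* Let $k\geq1$, $n\geq2k$, let $\mathcal{S},\mathcal{T}$ be antichains in $\mathcal{F}_{2k}^{[1,n]}$ with $\mathcal{T}\prec_p\mathcal{S}$, and let $j\geq1$. For each $i\geq 1$ set $$D_i:=\Big(B\big(\mathcal{S}([i,i+1]),i+2\big)\setminus B\big(\mathcal{T}([i,i+1]),i+2\big)\Big)*\overline{[i,i+1]},$$ and for $1\leq\ell\leq k$ set $$\Gamma_{j,\ell}:=B\big(\mathcal{S}([j+1,j+2\ell]),j+2\ell+1\big)\setminus B\big(\mathcal{T}([j,j+2\ell-1]),j+2\ell+1\big).$$ If $D_{j+1}$ is not the void complex, then $$D_j\cap D_{j+1}=\bigcup_{\ell=1}^{k}\Big(\Gamma_{j,\ell}*\overline{[j+1,j+2\ell-1]}\Big).$$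
   Context: Notation: $[m,n]=\{m,\dots,n\}$; $d$-subsets of $[n]$ are identified with increasing vectors; $G\leq_p F$ means componentwise $\leq$ and $G\prec_p F$ means $G\leq_p F-\mathbf{1}_d$ ($\mathbf{1}_d$ the all-ones vector). For $r\geq1$, $\mathcal{F}_{2r}^{[m,n]}$ is the set of sets $\{i_1,i_1+1,\dots,i_r,i_r+1\}$ with $m\leq i_1$, $i_r\leq n-1$, $i_j\leq i_{j+1}-2$, ordered by $\leq_p$; $\mathcal{F}_0^{[m,n]}=\{\emptyset\}$. For antichains, $\mathcal{T}\prec_p\mathcal{S}$ means every $G\in\mathcal{T}$ satisfies $G\prec_p F$ for some $F\in\mathcal{S}$. $\mathcal{F}_{2r}(\mathcal{S})$ is the order ideal generated by $\mathcal{S}$. For $1\leq\ell\leq k$ and $J=[j,j+2\ell-1]$, $\mathcal{S}(J)\subseteq\mathcal{F}_{2(k-\ell)}^{[1,n]}$ is the set of maximal elements of $\{H\in\mathcal{F}_{2(k-\ell)}^{[1,n]}: H\subseteq[j+2\ell,n],\ J\cup H\in\mathcal{F}(\mathcal{S})\}$. $B(\mathcal{S}(J),m)$ is the pure simplicial complex whose facets are the sets of $\mathcal{F}_{2(k-\ell)}(\mathcal{S}(J))\cap\mathcal{F}_{2(k-\ell)}^{[m,n]}$. For pure complexes $X,Y$, $X\setminus Y$ is the complex generated by the facets of $X$ that are not facets of $Y$. $\overline{V}$ is the full simplex on $V$ ($\overline{\emptyset}=\{\emptyset\}$), $*$ is the join (the join with the void complex, which has no faces, is void). *)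

theory Defs
  imports Main
begin

text \<open>Subsets of [n] are finite nat sets; the i-th coordinate of the increasing
vector of a set is given by sorted_list_of_set.\<close>

definition leq_p :: "nat set \<Rightarrow> nat set \<Rightarrow> bool" where
  "leq_p G F \<longleftrightarrow> card G = card F \<and>
     (\<forall>t < card F. sorted_list_of_set G ! t \<le> sorted_list_of_set F ! t)"

text \<open>G \<prec>_p F means G \<le>_p F - 1, i.e. strictly smaller in every coordinate.\<close>
definition prec_p :: "nat set \<Rightarrow> nat set \<Rightarrow> bool" where
  "prec_p G F \<longleftrightarrow> card G = card F \<and>
     (\<forall>t < card F. sorted_list_of_set G ! t < sorted_list_of_set F ! t)"

text \<open>dom_fam r m n is F_{2r}^{[m,n]} (0-indexed starting points f 0, ..., f (r-1)).\<close>
definition dom_fam :: "nat \<Rightarrow> nat \<Rightarrow> nat \<Rightarrow> nat set set" where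
  "dom_fam r m n = {H. \<exists>f::nat \<Rightarrow> nat.
      (0 < r \<longrightarrow> m \<le> f 0 \<and> f (r - 1) + 1 \<le> n) \<and>
      (\<forall>i. i + 1 < r \<longrightarrow> f i + 2 \<le> f (i + 1)) \<and>
      H = (\<Union>i<r. {f i, f i + 1})}"

definition antichain_in :: "nat \<Rightarrow> nat \<Rightarrow> nat set set \<Rightarrow> bool" where
  "antichain_in k n A \<longleftrightarrow> A \<subseteq> dom_fam k 1 n \<and>
     (\<forall>F\<in>A. \<forall>G\<in>A. leq_p G F \<longrightarrow> G = F)"

definition prec_fam :: "nat set set \<Rightarrow> nat set set \<Rightarrow> bool" where
  "prec_fam T S \<longleftrightarrow> (\<forall>G\<in>T. \<exists>F\<in>S. prec_p G F)"

definition ideal_gen :: "nat \<Rightarrow> nat \<Rightarrow> nat set set \<Rightarrow> nat set set" where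
  "ideal_gen r n A = {H \<in> dom_fam r 1 n. \<exists>F\<in>A. leq_p H F}"

definition maximals_p :: "nat set set \<Rightarrow> nat set set" where
  "maximals_p X = {H \<in> X. \<forall>H'\<in>X. leq_p H H' \<longrightarrow> H' = H}"

text \<open>restr k n S j l = S(J) for J = [j, j+2l-1].\<close>
definition restr :: "nat \<Rightarrow> nat \<Rightarrow> nat set set \<Rightarrow> nat \<Rightarrow> nat \<Rightarrow> nat set set" where
  "restr k n S j l = maximals_p {H \<in> dom_fam (k - l) 1 n.
      H \<subseteq> {j + 2*l..n} \<and> {j..j + 2*l - 1} \<union> H \<in> ideal_gen k n S}"

text \<open>Simplicial complexes are represented by their set of faces.\<close>
definition closure_cx :: "nat set set \<Rightarrow> nat set set" where
  "closure_cx F = {\<sigma>. \<exists>\<tau>\<in>F. \<sigma> \<subseteq> \<tau>}"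

definition facets :: "nat set set \<Rightarrow> nat set set" where
  "facets X = {\<sigma> \<in> X. \<forall>\<tau>\<in>X. \<sigma> \<subseteq> \<tau> \<longrightarrow> \<tau> = \<sigma>}"

definition cdiff :: "nat set set \<Rightarrow> nat set set \<Rightarrow> nat set set" where
  "cdiff X Y = closure_cx (facets X - facets Y)"

definition join :: "nat set set \<Rightarrow> nat set set \<Rightarrow> nat set set" where
  "join X Y = {\<sigma> \<union> \<tau> | \<sigma> \<tau>. \<sigma> \<in> X \<and> \<tau> \<in> Y}"

definition simplex :: "nat set \<Rightarrow> nat set set" where
  "simplex V = Pow V"

text \<open>Bcx k n l A m = B(A, m) for A \<subseteq> F_{2(k-l)}^{[1,n]}.\<close>
definition Bcx :: "nat \<Rightarrow> nat \<Rightarrow> nat \<Rightarrow> nat set set \<Rightarrow> nat \<Rightarrow> nat set set" where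
  "Bcx k n l A m = closure_cx (ideal_gen (k - l) n A \<inter> dom_fam (k - l) m n)"

definition Dcx :: "nat \<Rightarrow> nat \<Rightarrow> nat set set \<Rightarrow> nat set set \<Rightarrow> nat \<Rightarrow> nat set set" where
  "Dcx k n S T i = join
     (cdiff (Bcx k n 1 (restr k n S i 1) (i + 2)) (Bcx k n 1 (restr k n T i 1) (i + 2)))
     (simplex {i..i + 1})"

definition Gamma :: "nat \<Rightarrow> nat \<Rightarrow> nat set set \<Rightarrow> nat set set \<Rightarrow> nat \<Rightarrow> nat \<Rightarrow> nat set set" where
  "Gamma k n S T j l =
     cdiff (Bcx k n l (restr k n S (j + 1) l) (j + 2*l + 1))
           (Bcx k n l (restr k n T j l) (j + 2*l + 1))"

end

theory Submission
  imports Defs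
begin

text \<open>
  A set of \<open>\<F>\<^sub>2\<^sub>r\<close> is the union of dominoes \<open>{f i, f i + 1}\<close> for an increasing
  sequence \<open>f\<close> of starting points with gaps at least 2, and \<open>\<le>\<^sub>p\<close>, \<open>\<prec>\<^sub>p\<close> become
  pointwise comparisons of these sequences. In these terms a face of \<open>D\<^sub>i\<close> is a set covered by
  a domino set with first domino \<open>[i, i+1]\<close> lying in the ideal of \<open>\<S>\<close> but not in that of
  \<open>\<T>\<close>, and a face of \<open>\<Gamma>\<^sub>j\<^sub>,\<^sub>l * [j+1, j+2l-1]\<close>, avoiding \<open>j\<close>, is covered by a domino set
  \<open>q\<close> outside the ideal of \<open>\<T>\<close> that starts with a run of exactly \<open>l\<close> adjacent dominoes
  from \<open>j\<close> and stays in the ideal of \<open>\<S>\<close> once this run is shifted one step to the right.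

  For \<open>\<sigma>\<close> in \<open>D\<^sub>j \<inter> D\<^sub>j\<^sub>+\<^sub>1\<close>, witnessed by \<open>a\<close> and \<open>b\<close>, the pointwise minimum of \<open>a\<close> and
  \<open>b\<close> already has the shifting property, and among all sequences between it and \<open>a\<close> with
  that property and covering \<open>\<sigma>\<close> we take one of maximal coordinate sum. It cannot lie in the
  ideal of \<open>\<T>\<close>: then \<open>\<T> \<prec>\<^sub>p \<S>\<close> puts its translate by one into the ideal of \<open>\<S>\<close>, and raising
  by one the maximal block of adjacent dominoes at the first place where it differs from \<open>a\<close>
  keeps every property while increasing the sum. Conversely such a \<open>q\<close> and its shifted
  version witness membership in \<open>D\<^sub>j\<close> and \<open>D\<^sub>j\<^sub>+\<^sub>1\<close>.
\<close>

section \<open>Domino sequences\<close>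

definition dominoes :: "nat \<Rightarrow> (nat \<Rightarrow> nat) \<Rightarrow> nat set" where
  "dominoes r f = (\<Union>i<r. {f i, f i + 1})"

definition spaced :: "nat \<Rightarrow> (nat \<Rightarrow> nat) \<Rightarrow> bool" where
  "spaced r f \<longleftrightarrow> (\<forall>i. i + 1 < r \<longrightarrow> f i + 2 \<le> f (i + 1))"

definition admissible :: "nat \<Rightarrow> nat \<Rightarrow> nat \<Rightarrow> (nat \<Rightarrow> nat) \<Rightarrow> bool" where
  "admissible r m n f \<longleftrightarrow> (0 < r \<longrightarrow> m \<le> f 0 \<and> f (r - 1) + 1 \<le> n) \<and> spaced r f"

definition domino_list :: "nat \<Rightarrow> (nat \<Rightarrow> nat) \<Rightarrow> nat list" where
  "domino_list r f = map (\<lambda>t. f (t div 2) + t mod 2) [0..<2*r]"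

lemma dom_fam_iff: "H \<in> dom_fam r m n \<longleftrightarrow> (\<exists>f. admissible r m n f \<and> H = dominoes r f)"
  unfolding dom_fam_def admissible_def spaced_def dominoes_def by auto

lemma admissible_spaced: "admissible r m n f \<Longrightarrow> spaced r f"
  unfolding admissible_def by simp

lemma admissible_lower_mono: "admissible r m n f \<Longrightarrow> m' \<le> m \<Longrightarrow> admissible r m' n f"
  unfolding admissible_def by auto

lemma spaced_mono:
  assumes "spaced r f" "u \<le> v" "v < r"
  shows "f u + 2 * (v - u) \<le> f v"
  using assms(2,3)
proof (induction v)
  case (Suc v)
  show ?case
  proof (cases "u = Suc v")
    case False
    then have "f u + 2 * (v - u) \<le> f v" using Suc by simp
    moreover have "f v + 2 \<le> f (Suc v)" using assms(1) Suc(3) unfolding spaced_def by simp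
    ultimately show ?thesis using False Suc.prems(1) by (simp add: Suc_diff_le)
  qed simp
qed simp

lemma spaced_lower_bound: "spaced k f \<Longrightarrow> t < k \<Longrightarrow> f 0 + 2 * t \<le> f t"
  using spaced_mono[of k f 0 t] by simp

lemma spaced_cong: "(\<And>t. t < r \<Longrightarrow> f t = g t) \<Longrightarrow> spaced r f = spaced r g"
  unfolding spaced_def by auto

lemma admissible_cong: "(\<And>t. t < r \<Longrightarrow> f t = g t) \<Longrightarrow> admissible r m n f = admissible r m n g"
  unfolding admissible_def using spaced_cong[of r f g] by auto

lemma dominoes_cong: "(\<And>t. t < r \<Longrightarrow> f t = g t) \<Longrightarrow> dominoes r f = dominoes r g"
  unfolding dominoes_def by auto

lemma dominoes_memI: "t < r \<Longrightarrow> x = f t \<or> x = f t + 1 \<Longrightarrow> x \<in> dominoes r f"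
  unfolding dominoes_def by auto

lemma dominoes_memE:
  assumes "x \<in> dominoes r f"
  obtains t where "t < r" "x = f t \<or> x = f t + 1"
  using assms unfolding dominoes_def by auto

lemma finite_dominoes [simp]: "finite (dominoes r f)"
  unfolding dominoes_def by auto

lemma dominoes_lower_bound: "spaced k f \<Longrightarrow> x \<in> dominoes k f \<Longrightarrow> f 0 \<le> x"
  by (elim dominoes_memE) (use spaced_lower_bound in fastforce)

lemma domino_list_nth: "t < 2 * r \<Longrightarrow> domino_list r f ! t = f (t div 2) + t mod 2"
  unfolding domino_list_def by simp

lemma set_domino_list: "set (domino_list r f) = dominoes r f"
proof (intro equalityI subsetI)
  fix x assume "x \<in> set (domino_list r f)"
  then obtain t where "t < 2 * r" "x = f (t div 2) + t mod 2"
    unfolding domino_list_def by auto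
  then show "x \<in> dominoes r f"
    by (intro dominoes_memI[of "t div 2"]) (auto simp: mod2_eq_if)
next
  fix x assume "x \<in> dominoes r f"
  then obtain i where i: "i < r" "x = f i \<or> x = f i + 1" by (rule dominoes_memE)
  then have "x = domino_list r f ! (2 * i) \<or> x = domino_list r f ! (2 * i + 1)"
    by (auto simp: domino_list_nth)
  moreover have "2 * i + 1 < length (domino_list r f)" using i(1) by (simp add: domino_list_def)
  ultimately show "x \<in> set (domino_list r f)" by (metis Suc_eq_plus1 Suc_lessD nth_mem)
qed

lemma sorted_domino_list:
  assumes "spaced r f"
  shows "sorted_wrt (<) (domino_list r f)"
proof -
  have step: "domino_list r f ! t < domino_list r f ! (t + 1)" if "t + 1 < 2 * r" for t
  proof (cases "even t")
    case False
    then obtain i where t: "t = 2 * i + 1" using oddE by blast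
    then have "f i + 2 \<le> f (i + 1)" using assms that unfolding spaced_def by simp
    moreover have "(2 * i + 2) div 2 = i + 1" "(2 * i + 2) mod 2 = 0" by auto
    ultimately show ?thesis using that t by (simp add: domino_list_nth)
  qed (use that in \<open>auto simp: domino_list_nth\<close>)
  have "domino_list r f ! u < domino_list r f ! v" if "u < v" "v < 2 * r" for u v
    using that
  proof (induction v)
    case (Suc v)
    then show ?case using step[of v] by (cases "u = v") auto
  qed simp
  then show ?thesis by (simp add: sorted_wrt_iff_nth_less domino_list_def)
qed

lemma sorted_list_of_set_dominoes:
  "spaced r f \<Longrightarrow> sorted_list_of_set (dominoes r f) = domino_list r f"
  using sorted_domino_list set_domino_list
  by (metis sorted_list_of_set.idem_if_sorted_distinct strict_sorted_iff)

lemma card_dominoes: "spaced r f \<Longrightarrow> card (dominoes r f) = 2 * r"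
  using sorted_list_of_set_dominoes[of r f] length_sorted_list_of_set[of "dominoes r f"]
  by (simp add: domino_list_def)

lemma domino_coords_iff:
  fixes f g :: "nat \<Rightarrow> nat"
  assumes "\<And>x y. P (x + 1) (y + 1) = P x y"
  shows "(\<forall>t<2 * r. P (f (t div 2) + t mod 2) (g (t div 2) + t mod 2)) \<longleftrightarrow> (\<forall>i<r. P (f i) (g i))"
proof
  assume hyp: "\<forall>t<2 * r. P (f (t div 2) + t mod 2) (g (t div 2) + t mod 2)"
  show "\<forall>i<r. P (f i) (g i)"
  proof (intro allI impI)
    fix i assume "i < r"
    then show "P (f i) (g i)" using hyp[rule_format, of "2 * i"] by simp
  qed
next
  assume "\<forall>i<r. P (f i) (g i)"
  then show "\<forall>t<2 * r. P (f (t div 2) + t mod 2) (g (t div 2) + t mod 2)"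
    using assms by (auto simp: mod2_eq_if less_mult_imp_div_less)
qed

lemma leq_p_dominoes_iff:
  assumes "spaced r f" "spaced r g"
  shows "leq_p (dominoes r f) (dominoes r g) \<longleftrightarrow> (\<forall>i<r. f i \<le> g i)"
  using domino_coords_iff[of "(\<le>)" r f g]
  by (simp add: leq_p_def assms card_dominoes sorted_list_of_set_dominoes domino_list_nth)

lemma prec_p_dominoes_iff:
  assumes "spaced r f" "spaced r g"
  shows "prec_p (dominoes r f) (dominoes r g) \<longleftrightarrow> (\<forall>i<r. f i < g i)"
  using domino_coords_iff[of "(<)" r f g]
  by (simp add: prec_p_def assms card_dominoes sorted_list_of_set_dominoes domino_list_nth)

lemma dominoes_inject:
  assumes "spaced r f" "spaced r g" "dominoes r f = dominoes r g" "i < r"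
  shows "f i = g i"
  using leq_p_dominoes_iff[OF assms(1,2)] leq_p_dominoes_iff[OF assms(2,1)] assms(3,4)
  by (metis le_antisym leq_p_def order_refl)

lemma leq_p_refl: "leq_p A A"
  unfolding leq_p_def by simp

lemma leq_p_trans: "leq_p A B \<Longrightarrow> leq_p B C \<Longrightarrow> leq_p A C"
  unfolding leq_p_def by (metis order_trans)

lemma dominoes_subset_atLeastAtMost:
  assumes "admissible r m n f"
  shows "dominoes r f \<subseteq> {m..n}"
proof
  fix x assume "x \<in> dominoes r f"
  then obtain i where i: "i < r" "x = f i \<or> x = f i + 1" by (rule dominoes_memE)
  have sp: "spaced r f" and "m \<le> f 0" "f (r - 1) + 1 \<le> n"
    using assms i unfolding admissible_def by auto
  moreover have "f 0 \<le> f i" "f i + 2 * (r - 1 - i) \<le> f (r - 1)"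
    using spaced_mono[OF sp, of 0 i] spaced_mono[OF sp, of i "r - 1"] i by auto
  ultimately show "x \<in> {m..n}" using i by auto
qed

lemma dominoes_in_dom_fam_iff:
  assumes "spaced r f"
  shows "dominoes r f \<in> dom_fam r m n \<longleftrightarrow> admissible r m n f"
proof
  assume "dominoes r f \<in> dom_fam r m n"
  then obtain g where g: "admissible r m n g" "dominoes r f = dominoes r g"
    using dom_fam_iff by blast
  then have "\<And>t. t < r \<Longrightarrow> f t = g t"
    using dominoes_inject[OF assms admissible_spaced] by blast
  then show "admissible r m n f" using admissible_cong g(1) by blast
qed (auto simp: dom_fam_iff)

lemma admissible_if_le:
  assumes "admissible r m n g" "spaced r f" "0 < r \<Longrightarrow> m \<le> f 0" "\<forall>t<r. f t \<le> g t"
  shows "admissible r m n f"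
  using assms unfolding admissible_def by (metis diff_less le_trans less_numeral_extra(1) add_le_mono1)

lemma admissible_drop:
  assumes "admissible k m n f" "l \<le> k" "l < k \<Longrightarrow> m' \<le> f l"
  shows "admissible (k - l) m' n (\<lambda>t. f (t + l))"
  unfolding admissible_def spaced_def
proof (intro conjI impI allI)
  assume "0 < k - l"
  then show "m' \<le> f (0 + l)" using assms(3) by simp
  have "k - l - 1 + l = k - 1" using \<open>0 < k - l\<close> by simp
  then show "f (k - l - 1 + l) + 1 \<le> n" using assms(1) \<open>0 < k - l\<close> unfolding admissible_def by simp
next
  fix i assume "i + 1 < k - l"
  then have "f (i + l) + 2 \<le> f (i + l + 1)"
    using assms(1) unfolding admissible_def spaced_def by simp
  then show "f (i + l) + 2 \<le> f (i + 1 + l)" by (simp add: ac_simps)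
qed

lemma dominoes_split:
  assumes "l \<le> k"
  shows "dominoes k f = dominoes l f \<union> dominoes (k - l) (\<lambda>t. f (t + l))"
proof -
  have "{..<k} = {..<l} \<union> (\<lambda>t. t + l) ` {..<k - l}"
  proof (intro equalityI subsetI)
    fix x assume "x \<in> {..<k}"
    then show "x \<in> {..<l} \<union> (\<lambda>t. t + l) ` {..<k - l}"
      by (cases "x < l") (auto intro!: image_eqI[of _ _ "x - l"])
  qed (use assms in auto)
  then show ?thesis unfolding dominoes_def by auto
qed

lemma dominoes_run:
  assumes "1 \<le> l" "\<forall>t<l. f t = i + 2 * t"
  shows "dominoes l f = {i..i + 2 * l - 1}"
proof (intro equalityI subsetI)
  fix x assume "x \<in> {i..i + 2 * l - 1}"
  then have "(x - i) div 2 < l" "x = f ((x - i) div 2) \<or> x = f ((x - i) div 2) + 1"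
    using assms by auto
  then show "x \<in> dominoes l f" by (rule dominoes_memI)
qed (use assms in \<open>auto simp: dominoes_def\<close>)

lemma dominoes_run_split:
  assumes "1 \<le> l" "l \<le> k" "\<forall>t<l. f t = i + 2 * t"
  shows "dominoes k f = {i..i + 2 * l - 1} \<union> dominoes (k - l) (\<lambda>t. f (t + l))"
  using dominoes_split[OF assms(2)] dominoes_run[OF assms(1,3)] by simp

definition with_run :: "nat \<Rightarrow> nat \<Rightarrow> (nat \<Rightarrow> nat) \<Rightarrow> nat \<Rightarrow> nat" where
  "with_run j l h = (\<lambda>t. if t < l then j + 2 * t else h (t - l))"

lemma with_run_0 [simp]: "1 \<le> l \<Longrightarrow> with_run j l h 0 = j"
  by (simp add: with_run_def)

lemma dominoes_with_run:
  assumes "1 \<le> l" "l \<le> k"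
  shows "dominoes k (with_run j l h) = {j..j + 2 * l - 1} \<union> dominoes (k - l) h"
  using dominoes_split[OF assms(2), of "with_run j l h"] dominoes_run[OF assms(1), of "with_run j l h" j]
  by (simp add: with_run_def)

lemma spaced_with_run:
  assumes "spaced (k - l) h" "l < k \<Longrightarrow> j + 2 * l \<le> h 0"
  shows "spaced k (with_run j l h)"
  unfolding spaced_def
proof (intro allI impI)
  fix i assume i: "i + 1 < k"
  consider "i + 1 < l" | "i + 1 = l" | "l \<le> i" by linarith
  then show "with_run j l h i + 2 \<le> with_run j l h (i + 1)"
  proof cases
    case 3
    then have "(i - l) + 1 < k - l" "i + 1 - l = (i - l) + 1" using i by auto
    then show ?thesis using assms(1) 3 unfolding spaced_def with_run_def by auto
  qed (use assms(2) i in \<open>auto simp: with_run_def\<close>)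
qed

lemma spaced_min: "spaced r f \<Longrightarrow> spaced r g \<Longrightarrow> spaced r (\<lambda>t. min (f t) (g t))"
  unfolding spaced_def by (auto simp: min_def)

lemma dominoes_min:
  assumes f: "spaced r f" and g: "spaced r g" and x: "x \<in> dominoes r f" "x \<in> dominoes r g"
  shows "x \<in> dominoes r (\<lambda>t. min (f t) (g t))"
proof -
  obtain u where u: "u < r" "x = f u \<or> x = f u + 1" using x(1) by (rule dominoes_memE)
  obtain v where v: "v < r" "x = g v \<or> x = g v + 1" using x(2) by (rule dominoes_memE)
  consider "u = v" | "u < v" | "v < u" by linarith
  then show ?thesis
  proof cases
    case 2
    then have "min (f v) (g v) = g v" using spaced_mono[OF f, of u v] u v by auto
    then show ?thesis using v by (intro dominoes_memI[of v]) auto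
  next
    case 3
    then have "min (f u) (g u) = f u" using spaced_mono[OF g, of v u] u v by auto
    then show ?thesis using u by (intro dominoes_memI[of u]) auto
  qed (use u v in \<open>auto intro: dominoes_memI[of v] simp: min_def\<close>)
qed

lemma spaced_Suc: "spaced k q \<Longrightarrow> spaced k (\<lambda>t. q t + 1)"
  unfolding spaced_def by simp

section \<open>Order ideals and the families S(J)\<close>

lemma dominoes_in_ideal_gen_iff:
  assumes "X \<subseteq> dom_fam k 1 n" "spaced k f"
  shows "dominoes k f \<in> ideal_gen k n X \<longleftrightarrow>
     admissible k 1 n f \<and> (\<exists>g. admissible k 1 n g \<and> dominoes k g \<in> X \<and> (\<forall>t<k. f t \<le> g t))"
proof
  assume f: "dominoes k f \<in> ideal_gen k n X"
  then obtain F where F: "F \<in> X" "leq_p (dominoes k f) F" unfolding ideal_gen_def by auto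
  obtain g where g: "admissible k 1 n g" "F = dominoes k g" using F(1) assms(1) dom_fam_iff by blast
  then show "admissible k 1 n f \<and> (\<exists>g. admissible k 1 n g \<and> dominoes k g \<in> X \<and> (\<forall>t<k. f t \<le> g t))"
    using f F dominoes_in_dom_fam_iff[OF assms(2)] leq_p_dominoes_iff[OF assms(2) admissible_spaced]
    unfolding ideal_gen_def by auto
next
  assume "admissible k 1 n f \<and> (\<exists>g. admissible k 1 n g \<and> dominoes k g \<in> X \<and> (\<forall>t<k. f t \<le> g t))"
  then obtain g where "admissible k 1 n f" "admissible k 1 n g" "dominoes k g \<in> X" "\<forall>t<k. f t \<le> g t"
    by blast
  then show "dominoes k f \<in> ideal_gen k n X"
    using dominoes_in_dom_fam_iff[OF assms(2)] leq_p_dominoes_iff[OF assms(2) admissible_spaced]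
    unfolding ideal_gen_def by blast
qed

lemma admissible_if_in_ideal_gen:
  "X \<subseteq> dom_fam k 1 n \<Longrightarrow> spaced k f \<Longrightarrow> dominoes k f \<in> ideal_gen k n X \<Longrightarrow> admissible k 1 n f"
  using dominoes_in_ideal_gen_iff by blast

lemma ideal_gen_downward:
  assumes "X \<subseteq> dom_fam k 1 n" "spaced k f" "spaced k g" "0 < k \<Longrightarrow> 1 \<le> f 0"
    "dominoes k g \<in> ideal_gen k n X" "\<forall>t<k. f t \<le> g t"
  shows "dominoes k f \<in> ideal_gen k n X"
proof -
  obtain h where h: "admissible k 1 n g" "admissible k 1 n h" "dominoes k h \<in> X" "\<forall>t<k. g t \<le> h t"
    using dominoes_in_ideal_gen_iff[OF assms(1,3)] assms(5) by blast
  have "admissible k 1 n f" using admissible_if_le[OF h(1) assms(2,4,6)] by simp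
  then show ?thesis using dominoes_in_ideal_gen_iff[OF assms(1,2)] h assms(6) by (meson order_trans)
qed

lemma succ_in_ideal_gen_if_prec_fam:
  assumes S: "S \<subseteq> dom_fam k 1 n" and T: "T \<subseteq> dom_fam k 1 n" and "prec_fam T S"
    and q: "spaced k q" "dominoes k q \<in> ideal_gen k n T"
  shows "dominoes k (\<lambda>t. q t + 1) \<in> ideal_gen k n S"
proof -
  obtain g where g: "admissible k 1 n g" "dominoes k g \<in> T" "\<forall>t<k. q t \<le> g t"
    using dominoes_in_ideal_gen_iff[OF T q(1)] q(2) by blast
  obtain F where F: "F \<in> S" "prec_p (dominoes k g) F"
    using assms(3) g(2) unfolding prec_fam_def by blast
  obtain p where p: "admissible k 1 n p" "F = dominoes k p" using F(1) S dom_fam_iff by blast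
  have "\<forall>t<k. g t < p t"
    using prec_p_dominoes_iff[OF admissible_spaced[OF g(1)] admissible_spaced[OF p(1)]] F(2) p(2)
    by simp
  then have le: "\<forall>t<k. q t + 1 \<le> p t" using g(3) by (metis Suc_eq_plus1 Suc_leI le_less_trans)
  have sp: "spaced k (\<lambda>t. q t + 1)" using q(1) unfolding spaced_def by simp
  then have "admissible k 1 n (\<lambda>t. q t + 1)" using admissible_if_le[OF p(1) sp _ le] by simp
  then show ?thesis using dominoes_in_ideal_gen_iff[OF S sp] p F(1) le by blast
qed

lemma sum_list_less_if_le_neq:
  fixes xs ys :: "nat list"
  assumes "length xs = length ys" "\<forall>i<length xs. xs ! i \<le> ys ! i" "xs \<noteq> ys"
  shows "sum_list xs < sum_list ys"
  using assms
proof (induction xs ys rule: list_induct2)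
  case (Cons x xs y ys)
  have "x \<le> y" "\<forall>i<length xs. xs ! i \<le> ys ! i" using Cons.prems(1) by (force, force)
  moreover have "sum_list xs \<le> sum_list ys" using calculation(2) Cons.hyps sum_list_mono2 by blast
  ultimately show ?case using Cons by (cases "xs = ys") auto
qed simp

lemma sum_less_if_leq_p:
  assumes "leq_p A B" "A \<noteq> B" "finite A" "finite B"
  shows "\<Sum>A < (\<Sum>B :: nat)"
proof -
  have "sorted_list_of_set A \<noteq> sorted_list_of_set B"
    using assms(2-4) by (metis sorted_list_of_set.set_sorted_key_list_of_set)
  then have "sum_list (sorted_list_of_set A) < sum_list (sorted_list_of_set B)"
    using assms(1) sum_list_less_if_le_neq unfolding leq_p_def
    by (metis sorted_list_of_set.length_sorted_key_list_of_set)
  then show ?thesis by (simp add: distinct_sum_list_conv_Sum assms(3,4))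
qed

lemma exists_maximals_p_above:
  assumes "finite Xs" "H \<in> Xs" "\<forall>A\<in>Xs. finite A"
  shows "\<exists>H'\<in>maximals_p Xs. leq_p H H'"
proof -
  let ?P = "\<lambda>H'. H' \<in> Xs \<and> leq_p H H'"
  obtain H' where H': "?P H'" "\<forall>H''. ?P H'' \<longrightarrow> \<Sum>H'' \<le> \<Sum>H'"
    using ex_has_greatest_nat[of ?P H Sum "Suc (Max (Sum ` Xs))"] assms(1,2) leq_p_refl
    by (auto simp: le_imp_less_Suc)
  have "H' \<in> maximals_p Xs"
    unfolding maximals_p_def
  proof (intro CollectI conjI ballI impI)
    fix H'' assume "H'' \<in> Xs" "leq_p H' H''"
    then show "H'' = H'"
      using H' leq_p_trans sum_less_if_leq_p assms(3) by (metis not_le)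
  qed (use H' in blast)
  then show ?thesis using H' by blast
qed

lemma admissible_lower_bound:
  "admissible r m n h \<Longrightarrow> 0 < r \<Longrightarrow> dominoes r h \<subseteq> {m'..n} \<Longrightarrow> m' \<le> h 0"
  using dominoes_memI[of 0 r "h 0" h] by auto

lemma dom_fam_lower_mono: "m' \<le> m \<Longrightarrow> dom_fam r m n \<subseteq> dom_fam r m' n"
  using admissible_lower_mono by (fastforce simp: dom_fam_iff)

lemma run_union_in_ideal_gen_downward:
  assumes X: "X \<subseteq> dom_fam k 1 n" and l: "1 \<le> l" "l \<le> k" and j: "1 \<le> j"
    and H: "H \<in> dom_fam (k - l) 1 n" "H \<subseteq> {j + 2 * l..n}"
    and H': "H' \<in> dom_fam (k - l) 1 n" "H' \<subseteq> {j + 2 * l..n}"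
    and "leq_p H H'" and "{j..j + 2 * l - 1} \<union> H' \<in> ideal_gen k n X"
  shows "{j..j + 2 * l - 1} \<union> H \<in> ideal_gen k n X"
proof -
  obtain h h' where h: "admissible (k - l) 1 n h" "H = dominoes (k - l) h"
    and h': "admissible (k - l) 1 n h'" "H' = dominoes (k - l) h'"
    using H(1) H'(1) dom_fam_iff by metis
  have "l < k \<Longrightarrow> j + 2 * l \<le> h 0" "l < k \<Longrightarrow> j + 2 * l \<le> h' 0"
    using admissible_lower_bound[OF h(1)] admissible_lower_bound[OF h'(1)] H(2) H'(2) h(2) h'(2)
    by simp_all
  then have sp: "spaced k (with_run j l h)" "spaced k (with_run j l h')"
    using spaced_with_run admissible_spaced[OF h(1)] admissible_spaced[OF h'(1)] by blast+
  have "\<forall>i<k - l. h i \<le> h' i"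
    using assms(9) h(2) h'(2) leq_p_dominoes_iff[OF admissible_spaced[OF h(1)] admissible_spaced[OF h'(1)]]
    by simp
  then have le: "\<forall>t<k. with_run j l h t \<le> with_run j l h' t" by (simp add: with_run_def)
  have "dominoes k (with_run j l h') \<in> ideal_gen k n X"
    using assms(10) h'(2) dominoes_with_run[OF l] by simp
  then have "dominoes k (with_run j l h) \<in> ideal_gen k n X"
    using ideal_gen_downward[OF X sp _ _ le] j l by simp
  then show ?thesis using dominoes_with_run[OF l] h(2) by simp
qed

lemma ideal_gen_restr_eq:
  assumes X: "X \<subseteq> dom_fam k 1 n" and l: "1 \<le> l" "l \<le> k" and j: "1 \<le> j"
    and m: "j + 2 * l \<le> m"
  shows "ideal_gen (k - l) n (restr k n X j l) \<inter> dom_fam (k - l) m n =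
     {H \<in> dom_fam (k - l) m n. {j..j + 2 * l - 1} \<union> H \<in> ideal_gen k n X}"
proof -
  define Xs where "Xs = {H \<in> dom_fam (k - l) 1 n.
      H \<subseteq> {j + 2 * l..n} \<and> {j..j + 2 * l - 1} \<union> H \<in> ideal_gen k n X}"
  have restr: "restr k n X j l = maximals_p Xs" unfolding restr_def Xs_def by simp
  have sub: "H \<subseteq> {j + 2 * l..n}" "H \<in> dom_fam (k - l) 1 n" if "H \<in> dom_fam (k - l) m n" for H
  proof -
    show "H \<subseteq> {j + 2 * l..n}"
      using that m dominoes_subset_atLeastAtMost by (fastforce simp: dom_fam_iff)
    show "H \<in> dom_fam (k - l) 1 n"
      using that dom_fam_lower_mono[of 1 m "k - l" n] m j by auto
  qed
  have Xs_Pow: "Xs \<subseteq> Pow {1..n}"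
    unfolding Xs_def using dominoes_subset_atLeastAtMost by (fastforce simp: dom_fam_iff)
  show ?thesis
  proof (intro equalityI subsetI)
    fix H assume "H \<in> ideal_gen (k - l) n (restr k n X j l) \<inter> dom_fam (k - l) m n"
    then obtain H' where H: "H \<in> dom_fam (k - l) m n" "H' \<in> Xs" "leq_p H H'"
      unfolding ideal_gen_def restr maximals_p_def by blast
    then show "H \<in> {H \<in> dom_fam (k - l) m n. {j..j + 2 * l - 1} \<union> H \<in> ideal_gen k n X}"
      using run_union_in_ideal_gen_downward[OF X l j sub(2,1)[OF H(1)]] unfolding Xs_def by blast
  next
    fix H assume H: "H \<in> {H \<in> dom_fam (k - l) m n. {j..j + 2 * l - 1} \<union> H \<in> ideal_gen k n X}"
    then have "H \<in> Xs" unfolding Xs_def using sub by blast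
    then obtain H' where "H' \<in> maximals_p Xs" "leq_p H H'"
      using exists_maximals_p_above[of Xs H] Xs_Pow finite_subset[OF Xs_Pow]
      by (meson PowD finite_atLeastAtMost finite_Pow_iff rev_finite_subset subsetD)
    then show "H \<in> ideal_gen (k - l) n (restr k n X j l) \<inter> dom_fam (k - l) m n"
      unfolding ideal_gen_def restr using sub H by blast
  qed
qed

section \<open>Pure complexes generated by equicardinal facets\<close>

lemma facets_closure_cx:
  assumes "\<forall>\<tau>\<in>A. finite \<tau> \<and> card \<tau> = c"
  shows "facets (closure_cx A) = A"
proof
  show "A \<subseteq> facets (closure_cx A)"
  proof
    fix \<tau> assume \<tau>: "\<tau> \<in> A"
    have "\<rho> = \<tau>" if \<rho>: "\<rho> \<in> closure_cx A" "\<tau> \<subseteq> \<rho>" for \<rho>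
    proof -
      obtain \<tau>' where "\<tau>' \<in> A" "\<rho> \<subseteq> \<tau>'" using \<rho>(1) unfolding closure_cx_def by blast
      then show ?thesis using assms \<tau> \<rho>(2) by (metis card_subset_eq order_trans subset_antisym)
    qed
    then show "\<tau> \<in> facets (closure_cx A)" unfolding facets_def closure_cx_def using \<tau> by blast
  qed
qed (unfold facets_def closure_cx_def, blast)

lemma cdiff_closure_cx:
  assumes "\<forall>\<tau>\<in>A \<union> B. finite \<tau> \<and> card \<tau> = c"
  shows "cdiff (closure_cx A) (closure_cx B) = closure_cx (A - B)"
  unfolding cdiff_def using facets_closure_cx[of A c] facets_closure_cx[of B c] assms by auto

lemma mem_join_closure_cx_simplex: "\<sigma> \<in> join (closure_cx A) (simplex V) \<longleftrightarrow> (\<exists>H\<in>A. \<sigma> \<subseteq> H \<union> V)"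
proof
  assume "\<exists>H\<in>A. \<sigma> \<subseteq> H \<union> V"
  then obtain H where "H \<in> A" "\<sigma> \<subseteq> H \<union> V" by blast
  then have "\<sigma> - V \<in> closure_cx A" "\<sigma> \<inter> V \<in> simplex V" "\<sigma> = (\<sigma> - V) \<union> (\<sigma> \<inter> V)"
    unfolding closure_cx_def simplex_def by blast+
  then show "\<sigma> \<in> join (closure_cx A) (simplex V)" unfolding join_def by blast
qed (unfold join_def closure_cx_def simplex_def, blast)

lemma card_dom_fam: "H \<in> dom_fam r m n \<Longrightarrow> finite H \<and> card H = 2 * r"
  using card_dominoes admissible_spaced by (auto simp: dom_fam_iff)

lemma mem_join_cdiff_Bcx_restr_iff:
  assumes S: "S \<subseteq> dom_fam k 1 n" and T: "T \<subseteq> dom_fam k 1 n" and l: "1 \<le> l" "l \<le> k"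
    and i: "1 \<le> i" "i + 2 * l \<le> m" and j: "1 \<le> j" "j + 2 * l \<le> m"
  shows "\<sigma> \<in> join (cdiff (Bcx k n l (restr k n S i l) m) (Bcx k n l (restr k n T j l) m)) (simplex V)
    \<longleftrightarrow> (\<exists>H\<in>dom_fam (k - l) m n. {i..i + 2 * l - 1} \<union> H \<in> ideal_gen k n S
          \<and> {j..j + 2 * l - 1} \<union> H \<notin> ideal_gen k n T \<and> \<sigma> \<subseteq> H \<union> V)"
proof -
  have "cdiff (Bcx k n l (restr k n S i l) m) (Bcx k n l (restr k n T j l) m) =
     closure_cx ({H \<in> dom_fam (k - l) m n. {i..i + 2 * l - 1} \<union> H \<in> ideal_gen k n S} -
                 {H \<in> dom_fam (k - l) m n. {j..j + 2 * l - 1} \<union> H \<in> ideal_gen k n T})"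
    unfolding Bcx_def ideal_gen_restr_eq[OF S l i] ideal_gen_restr_eq[OF T l j]
    by (rule cdiff_closure_cx) (use card_dom_fam in blast)
  then show ?thesis by (simp add: mem_join_closure_cx_simplex) blast
qed

section \<open>Initial runs of adjacent dominoes\<close>

definition run_length :: "nat \<Rightarrow> nat \<Rightarrow> (nat \<Rightarrow> nat) \<Rightarrow> nat" where
  "run_length j k q = (LEAST s. s = k \<or> q s \<noteq> j + 2 * s)"

definition shift_run :: "nat \<Rightarrow> nat \<Rightarrow> (nat \<Rightarrow> nat) \<Rightarrow> nat \<Rightarrow> nat" where
  "shift_run j k q = (\<lambda>t. if t < run_length j k q then q t + 1 else q t)"

lemma run_length_le: "run_length j k q \<le> k"
  unfolding run_length_def by (rule Least_le) simp

lemma run_length_run: "t < run_length j k q \<Longrightarrow> q t = j + 2 * t"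
  unfolding run_length_def using not_less_Least by fastforce

lemma run_length_stop: "run_length j k q < k \<Longrightarrow> q (run_length j k q) \<noteq> j + 2 * run_length j k q"
  unfolding run_length_def using LeastI_ex[of "\<lambda>s. s = k \<or> q s \<noteq> j + 2 * s"] by auto

lemma run_length_pos: "q 0 = j \<Longrightarrow> 1 \<le> k \<Longrightarrow> 1 \<le> run_length j k q"
  using run_length_stop[of j k q] by (cases "run_length j k q") auto

lemma run_length_next:
  "spaced k q \<Longrightarrow> q 0 = j \<Longrightarrow> run_length j k q < k \<Longrightarrow> j + 2 * run_length j k q + 1 \<le> q (run_length j k q)"
  using spaced_lower_bound run_length_stop by fastforce

lemma run_length_eqI:
  assumes "s \<le> k" "\<forall>t<s. q t = j + 2 * t" "s < k \<Longrightarrow> q s \<noteq> j + 2 * s"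
  shows "run_length j k q = s"
  unfolding run_length_def
proof (rule Least_equality)
  show "s = k \<or> q s \<noteq> j + 2 * s" using assms by (cases "s = k") auto
qed (use assms in \<open>metis not_le\<close>)

lemma run_length_eq_if_agree:
  assumes "spaced k q" "q 0 = j" "\<forall>t<k. q t \<le> q' t" "\<forall>t<run_length j k q. q' t = q t"
  shows "run_length j k q' = run_length j k q"
proof (rule run_length_eqI)
  show "q' (run_length j k q) \<noteq> j + 2 * run_length j k q" if "run_length j k q < k"
    using run_length_next[OF assms(1,2) that] assms(3) that by fastforce
qed (use assms(4) run_length_le run_length_run in auto)

lemma spaced_shift_run:
  assumes "spaced k q" "q 0 = j"
  shows "spaced k (shift_run j k q)"
  unfolding spaced_def
proof (intro allI impI)
  fix i assume i: "i + 1 < k"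
  let ?s = "run_length j k q"
  have "q i + 2 \<le> q (i + 1)" using assms(1) i unfolding spaced_def by blast
  moreover have "q i + 3 \<le> q (i + 1)" if "i + 1 = ?s"
    using run_length_next[OF assms] run_length_run[of i j k q] that i by simp
  ultimately show "shift_run j k q i + 2 \<le> shift_run j k q (i + 1)"
    unfolding shift_run_def by (cases "i + 1 < ?s"; cases "i + 1 = ?s") auto
qed

lemma shift_run_0: "q 0 = j \<Longrightarrow> 1 \<le> k \<Longrightarrow> shift_run j k q 0 = j + 1"
  using run_length_pos[of q j k] by (simp add: shift_run_def)

lemma in_ideal_gen_if_shift_run:
  assumes "X \<subseteq> dom_fam k 1 n" "spaced k q" "q 0 = j" "1 \<le> j"
    "dominoes k (shift_run j k q) \<in> ideal_gen k n X"
  shows "dominoes k q \<in> ideal_gen k n X"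
  using ideal_gen_downward[OF assms(1,2) spaced_shift_run[OF assms(2,3)]] assms(3-5)
  by (simp add: shift_run_def)

lemma shift_run_le_if_run_below:
  assumes "\<forall>t<k. j + 1 + 2 * t \<le> b t" "\<forall>t<k. q t \<le> b t"
  shows "\<forall>t<k. shift_run j k q t \<le> b t"
  using assms run_length_run[of _ j k q] by (auto simp: shift_run_def)

lemma run_length_with_run:
  assumes "1 \<le> l" "l \<le> k" "l < k \<Longrightarrow> j + 2 * l < h 0"
  shows "run_length j k (with_run j l h) = l"
  using assms by (intro run_length_eqI) (auto simp: with_run_def)

lemma shift_run_with_run:
  assumes "1 \<le> l" "l \<le> k" "l < k \<Longrightarrow> j + 2 * l < h 0"
  shows "shift_run j k (with_run j l h) = with_run (j + 1) l h"
  using run_length_with_run[of l k j h] assms by (auto simp: shift_run_def with_run_def)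

lemma dominoes_shift_run_split:
  assumes "run_length j k q = l" "1 \<le> l"
  shows "dominoes k (shift_run j k q) = {j + 1..j + 1 + 2 * l - 1} \<union> dominoes (k - l) (\<lambda>t. q (t + l))"
proof -
  have "\<forall>t<l. shift_run j k q t = j + 1 + 2 * t"
    using assms(1) run_length_run[of _ j k q] by (simp add: shift_run_def)
  moreover have "(\<lambda>t. shift_run j k q (t + l)) = (\<lambda>t. q (t + l))"
    using assms(1) by (auto simp: shift_run_def)
  ultimately show ?thesis
    using dominoes_run_split[OF assms(2) _, of k "shift_run j k q" "j + 1"] assms run_length_le[of j k q]
    by simp
qed

lemma dominoes_subset_shift_run:
  assumes "q 0 = j"
  shows "dominoes k q - {j} \<subseteq> dominoes k (shift_run j k q)"
proof
  fix x assume x: "x \<in> dominoes k q - {j}"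
  then obtain t where t: "t < k" "x = q t \<or> x = q t + 1" by (auto elim: dominoes_memE)
  show "x \<in> dominoes k (shift_run j k q)"
  proof (cases "t < run_length j k q \<and> x = q t")
    case True
    then have "0 < t" using x assms by (cases t) auto
    moreover have "x = j + 2 * t" "shift_run j k q (t - 1) = j + 2 * (t - 1) + 1"
      using True run_length_run[of t j k q] run_length_run[of "t - 1" j k q]
      by (auto simp: shift_run_def)
    ultimately have "x = shift_run j k q (t - 1) + 1" by simp
    then show ?thesis using t(1) by (intro dominoes_memI[of "t - 1"]) auto
  next
    case False
    then have "x = shift_run j k q t \<or> x = shift_run j k q t + 1"
      using t(2) by (auto simp: shift_run_def)
    with t(1) show ?thesis by (rule dominoes_memI)
  qed
qed

section \<open>Faces of D and of the Gamma joins\<close>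

lemma mem_Dcx_iff:
  assumes S: "S \<subseteq> dom_fam k 1 n" and T: "T \<subseteq> dom_fam k 1 n" and k: "1 \<le> k" and i: "1 \<le> i"
  shows "\<sigma> \<in> Dcx k n S T i \<longleftrightarrow> (\<exists>f. spaced k f \<and> f 0 = i \<and> dominoes k f \<in> ideal_gen k n S
            \<and> dominoes k f \<notin> ideal_gen k n T \<and> \<sigma> \<subseteq> dominoes k f)"
  (is "_ \<longleftrightarrow> (\<exists>f. ?P f)")
proof -
  have "\<sigma> \<in> Dcx k n S T i \<longleftrightarrow> (\<exists>H\<in>dom_fam (k - 1) (i + 2) n. {i..i + 1} \<union> H \<in> ideal_gen k n S
          \<and> {i..i + 1} \<union> H \<notin> ideal_gen k n T \<and> \<sigma> \<subseteq> H \<union> {i..i + 1})"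
    unfolding Dcx_def using mem_join_cdiff_Bcx_restr_iff[OF S T _ k i _ i, of "i + 2"] by simp
  also have "\<dots> \<longleftrightarrow> (\<exists>f. ?P f)"
  proof
    assume "\<exists>H\<in>dom_fam (k - 1) (i + 2) n. {i..i + 1} \<union> H \<in> ideal_gen k n S
          \<and> {i..i + 1} \<union> H \<notin> ideal_gen k n T \<and> \<sigma> \<subseteq> H \<union> {i..i + 1}"
    then obtain h where h: "admissible (k - 1) (i + 2) n h"
      "{i..i + 1} \<union> dominoes (k - 1) h \<in> ideal_gen k n S"
      "{i..i + 1} \<union> dominoes (k - 1) h \<notin> ideal_gen k n T" "\<sigma> \<subseteq> dominoes (k - 1) h \<union> {i..i + 1}"
      by (auto simp: dom_fam_iff)
    have "spaced k (with_run i 1 h)"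
      using spaced_with_run[of k 1 h i] h(1) unfolding admissible_def by simp
    then have "?P (with_run i 1 h)"
      using h dominoes_with_run[of 1 k i h] k by auto
    then show "\<exists>f. ?P f" by blast
  next
    assume "\<exists>f. ?P f"
    then obtain f where f: "?P f" by blast
    have "admissible k 1 n f" using admissible_if_in_ideal_gen[OF S] f by blast
    then have "admissible (k - 1) (i + 2) n (\<lambda>t. f (t + 1))"
      using admissible_drop[of k 1 n f 1 "i + 2"] f spaced_lower_bound[of k f 1] k by simp
    moreover have "dominoes k f = {i..i + 1} \<union> dominoes (k - 1) (\<lambda>t. f (t + 1))"
      using dominoes_run_split[of 1 k f i] k f by simp
    ultimately show "\<exists>H\<in>dom_fam (k - 1) (i + 2) n. {i..i + 1} \<union> H \<in> ideal_gen k n S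
          \<and> {i..i + 1} \<union> H \<notin> ideal_gen k n T \<and> \<sigma> \<subseteq> H \<union> {i..i + 1}"
      using f dom_fam_iff by (intro bexI[of _ "dominoes (k - 1) (\<lambda>t. f (t + 1))"]) auto
  qed
  finally show ?thesis .
qed

lemma mem_join_Gamma_iff:
  assumes S: "S \<subseteq> dom_fam k 1 n" and T: "T \<subseteq> dom_fam k 1 n" and l: "1 \<le> l" "l \<le> k"
    and j: "1 \<le> j"
  shows "\<sigma> \<in> join (Gamma k n S T j l) (simplex {j + 1..j + 2 * l - 1}) \<longleftrightarrow>
    (\<exists>h. admissible (k - l) (j + 2 * l + 1) n h
       \<and> {j + 1..j + 1 + 2 * l - 1} \<union> dominoes (k - l) h \<in> ideal_gen k n S
       \<and> {j..j + 2 * l - 1} \<union> dominoes (k - l) h \<notin> ideal_gen k n T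
       \<and> \<sigma> \<subseteq> dominoes (k - l) h \<union> {j + 1..j + 2 * l - 1})"
proof -
  have "\<sigma> \<in> join (Gamma k n S T j l) (simplex {j + 1..j + 2 * l - 1}) \<longleftrightarrow>
    (\<exists>H\<in>dom_fam (k - l) (j + 2 * l + 1) n. {j + 1..j + 1 + 2 * l - 1} \<union> H \<in> ideal_gen k n S
       \<and> {j..j + 2 * l - 1} \<union> H \<notin> ideal_gen k n T \<and> \<sigma> \<subseteq> H \<union> {j + 1..j + 2 * l - 1})"
    unfolding Gamma_def by (rule mem_join_cdiff_Bcx_restr_iff[OF S T l _ _ j]) simp_all
  then show ?thesis unfolding Bex_def dom_fam_iff by blast
qed

lemma mem_Gamma_union_iff:
  assumes S: "S \<subseteq> dom_fam k 1 n" and T: "T \<subseteq> dom_fam k 1 n" and k: "1 \<le> k" and j: "1 \<le> j"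
  shows "\<sigma> \<in> (\<Union>l\<in>{1..k}. join (Gamma k n S T j l) (simplex {j + 1..j + 2 * l - 1})) \<longleftrightarrow>
    (\<exists>q. spaced k q \<and> q 0 = j \<and> dominoes k (shift_run j k q) \<in> ideal_gen k n S
       \<and> dominoes k q \<notin> ideal_gen k n T \<and> \<sigma> \<subseteq> dominoes k q - {j})"
  (is "_ \<longleftrightarrow> (\<exists>q. ?P q)")
proof
  assume "\<sigma> \<in> (\<Union>l\<in>{1..k}. join (Gamma k n S T j l) (simplex {j + 1..j + 2 * l - 1}))"
  then obtain l h where l: "1 \<le> l" "l \<le> k" and h: "admissible (k - l) (j + 2 * l + 1) n h"
    "{j + 1..j + 1 + 2 * l - 1} \<union> dominoes (k - l) h \<in> ideal_gen k n S"
    "{j..j + 2 * l - 1} \<union> dominoes (k - l) h \<notin> ideal_gen k n T"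
    "\<sigma> \<subseteq> dominoes (k - l) h \<union> {j + 1..j + 2 * l - 1}"
    using mem_join_Gamma_iff[OF S T _ _ j] by auto
  have h0: "l < k \<Longrightarrow> j + 2 * l < h 0" using h(1) unfolding admissible_def by simp
  have "spaced k (with_run j l h)"
    using spaced_with_run[of k l h j] h0 admissible_spaced[OF h(1)] by fastforce
  moreover have "j \<notin> dominoes (k - l) h"
    using dominoes_subset_atLeastAtMost[OF h(1)] by auto
  ultimately have "?P (with_run j l h)"
    using h l shift_run_with_run[of l k j h] h0 dominoes_with_run[OF l] by auto
  then show "\<exists>q. ?P q" by blast
next
  assume "\<exists>q. ?P q"
  then obtain q where q: "?P q" by blast
  define l where "l = run_length j k q"
  have l: "1 \<le> l" "l \<le> k" unfolding l_def using run_length_pos run_length_le q k by auto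
  have "dominoes k q \<in> ideal_gen k n S"
    using in_ideal_gen_if_shift_run[OF S _ _ j] q by blast
  then have "admissible (k - l) (j + 2 * l + 1) n (\<lambda>t. q (t + l))"
    using admissible_drop[OF admissible_if_in_ideal_gen[OF S] l(2)] run_length_next q
    unfolding l_def by blast
  moreover have "dominoes k q = {j..j + 2 * l - 1} \<union> dominoes (k - l) (\<lambda>t. q (t + l))"
    using dominoes_run_split[OF l] run_length_run unfolding l_def by blast
  ultimately have "\<sigma> \<in> join (Gamma k n S T j l) (simplex {j + 1..j + 2 * l - 1})"
    using q dominoes_shift_run_split[OF l_def[symmetric] l(1)] unfolding mem_join_Gamma_iff[OF S T l j]
    by (intro exI[of _ "\<lambda>t. q (t + l)"]) auto
  then show "\<sigma> \<in> (\<Union>l\<in>{1..k}. join (Gamma k n S T j l) (simplex {j + 1..j + 2 * l - 1}))"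
    using l by auto
qed

section \<open>Raising a block of adjacent dominoes\<close>

definition raise_block :: "nat \<Rightarrow> nat \<Rightarrow> (nat \<Rightarrow> nat) \<Rightarrow> nat \<Rightarrow> nat" where
  "raise_block u v q = (\<lambda>t. if u \<le> t \<and> t \<le> v then q t + 1 else q t)"

definition tight_block :: "nat \<Rightarrow> nat \<Rightarrow> (nat \<Rightarrow> nat) \<Rightarrow> bool" where
  "tight_block u v q \<longleftrightarrow> (\<forall>t. u \<le> t \<longrightarrow> t \<le> v \<longrightarrow> q t = q u + 2 * (t - u))"

lemma tight_blockD: "tight_block u v q \<Longrightarrow> u \<le> t \<Longrightarrow> t \<le> v \<Longrightarrow> q t = q u + 2 * (t - u)"
  unfolding tight_block_def by blast

lemma exists_maximal_tight_block:
  assumes "spaced k q" "u < k"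
  shows "\<exists>v. u \<le> v \<and> v < k \<and> tight_block u v q \<and> (v + 1 < k \<longrightarrow> q v + 3 \<le> q (v + 1))"
proof -
  let ?P = "\<lambda>v. u \<le> v \<and> v < k \<and> tight_block u v q"
  have "?P u" using assms(2) unfolding tight_block_def by simp
  then obtain v where v: "?P v" "\<And>v'. ?P v' \<Longrightarrow> v' \<le> v"
    using Nat.ex_has_greatest_nat[of ?P u k] by auto
  have "q v + 3 \<le> q (v + 1)" if "v + 1 < k"
  proof -
    have "q v + 2 \<le> q (v + 1)" using assms(1) that unfolding spaced_def by blast
    moreover have "q (v + 1) \<noteq> q v + 2"
    proof
      assume step: "q (v + 1) = q v + 2"
      have "tight_block u (v + 1) q"
        unfolding tight_block_def
      proof (intro allI impI)
        fix t assume t: "u \<le> t" "t \<le> v + 1"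
        have tv: "q v = q u + 2 * (v - u)" using v(1) unfolding tight_block_def by blast
        show "q t = q u + 2 * (t - u)"
        proof (cases "t = v + 1")
          case True then show ?thesis using step tv v(1) by (simp add: Suc_diff_le)
        next
          case False
          then have "t \<le> v" using t(2) by simp
          then show ?thesis using v(1) t(1) unfolding tight_block_def by blast
        qed
      qed
      then show False using v(1) v(2)[of "v + 1"] that by simp
    qed
    ultimately show ?thesis by simp
  qed
  then show ?thesis using v(1) by blast
qed

lemma spaced_raise_block:
  assumes "spaced k q" "v + 1 < k \<Longrightarrow> q v + 3 \<le> q (v + 1)"
  shows "spaced k (raise_block u v q)"
  unfolding spaced_def
proof (intro allI impI)
  fix i assume i: "i + 1 < k"
  then have "q i + 2 \<le> q (i + 1)" using assms(1) unfolding spaced_def by blast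
  then show "raise_block u v q i + 2 \<le> raise_block u v q (i + 1)"
    using assms(2) i unfolding raise_block_def by (cases "i = v") auto
qed

lemma raise_block_le:
  assumes "spaced k a" "tight_block u v q" "v < k" "q u < a u" "\<forall>t<k. q t \<le> a t"
  shows "\<forall>t<k. raise_block u v q t \<le> a t"
proof (intro allI impI)
  fix t assume "t < k"
  show "raise_block u v q t \<le> a t"
  proof (cases "u \<le> t \<and> t \<le> v")
    case True
    then have "a u + 2 * (t - u) \<le> a t" "q t = q u + 2 * (t - u)"
      using spaced_mono[OF assms(1), of u t] tight_blockD[OF assms(2), of t] assms(3) by auto
    then show ?thesis using assms(4) True by (simp add: raise_block_def)
  qed (use assms(5) \<open>t < k\<close> in \<open>auto simp: raise_block_def\<close>)
qed

lemma dominoes_raise_block: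
  assumes "tight_block u v q" "v < k" "x \<in> dominoes k q" "x \<noteq> q u"
  shows "x \<in> dominoes k (raise_block u v q)"
proof -
  obtain t where t: "t < k" "x = q t \<or> x = q t + 1" using assms(3) by (rule dominoes_memE)
  show ?thesis
  proof (cases "u \<le> t \<and> t \<le> v \<and> x = q t")
    case True
    then have "u < t" using assms(4) by (cases "u = t") auto
    moreover have "q t = q u + 2 * (t - u)" "q (t - 1) = q u + 2 * (t - 1 - u)"
      using tight_blockD[OF assms(1), of t] tight_blockD[OF assms(1), of "t - 1"] True \<open>u < t\<close> by auto
    ultimately have "q t = q (t - 1) + 2" "u \<le> t - 1" by auto
    then have "x = raise_block u v q (t - 1) + 1"
      using True by (auto simp: raise_block_def)
    then show ?thesis using t(1) by (intro dominoes_memI[of "t - 1"]) auto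
  next
    case False
    then have "x = raise_block u v q t \<or> x = raise_block u v q t + 1"
      using t(2) by (auto simp: raise_block_def)
    with t(1) show ?thesis by (rule dominoes_memI)
  qed
qed

lemma first_gap_not_mem_dominoes:
  assumes "spaced k q" "spaced k a" "u < k" "q u < a u" "\<forall>t<u. q t = a t"
  shows "q u \<notin> dominoes k a"
proof
  assume "q u \<in> dominoes k a"
  then obtain t where t: "t < k" "q u = a t \<or> q u = a t + 1" by (rule dominoes_memE)
  show False
  proof (cases "t < u")
    case True
    then have "q t + 2 \<le> q u" using spaced_mono[OF assms(1), of t u] assms(3) by simp
    then show False using t True assms(5) by auto
  next
    case False
    then show False using spaced_mono[OF assms(2), of u t] t assms(4) by auto
  qed
qed

lemma exists_first_gap:
  fixes q a :: "nat \<Rightarrow> nat"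
  assumes "\<forall>t<k. q t \<le> a t" "\<exists>t<k. q t \<noteq> a t"
  obtains u where "u < k" "q u < a u" "\<forall>t<u. q t = a t"
proof -
  let ?u = "LEAST t. t < k \<and> q t < a t"
  have ex: "\<exists>t. t < k \<and> q t < a t" using assms by (meson le_neq_implies_less)
  have "\<forall>t<?u. q t = a t"
    using not_less_Least[of _ "\<lambda>t. t < k \<and> q t < a t"] LeastI_ex[OF ex] assms(1)
    by (metis le_neq_implies_less order.strict_trans)
  then show ?thesis using that LeastI_ex[OF ex] by blast
qed

lemma exists_raise_towards:
  assumes q: "spaced k q" and a: "spaced k a" and le: "\<forall>t<k. q t \<le> a t" and "\<exists>t<k. q t \<noteq> a t"
    and \<sigma>: "\<sigma> \<subseteq> dominoes k q" "\<sigma> \<subseteq> dominoes k a"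
  shows "\<exists>q'. spaced k q' \<and> (\<forall>t<k. q t \<le> q' t \<and> q' t \<le> a t \<and> q' t \<le> q t + 1)
    \<and> (\<exists>t<k. q t < q' t) \<and> (\<forall>t. (\<forall>t'\<le>t. q t' = a t') \<longrightarrow> q' t = q t) \<and> \<sigma> \<subseteq> dominoes k q'"
proof -
  obtain u where u: "u < k" "q u < a u" "\<forall>t<u. q t = a t"
    using exists_first_gap[OF le assms(4)] by blast
  obtain v where v: "u \<le> v" "v < k" "tight_block u v q" "v + 1 < k \<longrightarrow> q v + 3 \<le> q (v + 1)"
    using exists_maximal_tight_block[OF q u(1)] by blast
  have "\<sigma> \<subseteq> dominoes k (raise_block u v q)"
    using \<sigma> first_gap_not_mem_dominoes[OF q a u] dominoes_raise_block[OF v(3,2)] by blast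
  moreover have "\<forall>t. (\<forall>t'\<le>t. q t' = a t') \<longrightarrow> raise_block u v q t = q t"
    using u(2) by (auto simp: raise_block_def)
  ultimately show ?thesis
    using spaced_raise_block[OF q] raise_block_le[OF a v(3,2) u(2) le] v u(1)
    by (intro exI[of _ "raise_block u v q"]) (auto simp: raise_block_def)
qed

lemma shift_run_in_ideal_gen_if_le:
  assumes "X \<subseteq> dom_fam k 1 n" "spaced k q" "q 0 = j" "1 \<le> j" "spaced k p"
    "dominoes k p \<in> ideal_gen k n X" "\<forall>t<k. shift_run j k q t \<le> p t"
  shows "dominoes k (shift_run j k q) \<in> ideal_gen k n X"
  using ideal_gen_downward[OF assms(1) spaced_shift_run[OF assms(2,3)] assms(5) _ assms(6,7)] assms(3,4)
  by (simp add: shift_run_def)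

lemma shift_run_le_Suc_if_agree:
  assumes "spaced k q" "q 0 = j" "\<forall>t<k. q t \<le> q' t \<and> q' t \<le> q t + 1"
    "\<forall>t<run_length j k q. q' t = q t"
  shows "\<forall>t<k. shift_run j k q' t \<le> q t + 1"
proof -
  have "run_length j k q' = run_length j k q"
    using run_length_eq_if_agree[OF assms(1,2) _ assms(4)] assms(3) by blast
  then show ?thesis using assms(3,4) unfolding shift_run_def by simp
qed

lemma run_agrees_if_between_min:
  assumes "\<forall>t<k. min (a t) (b t) \<le> q t \<and> q t \<le> a t" "\<forall>t<k. j + 1 + 2 * t \<le> b t"
    "t < run_length j k q"
  shows "q t = a t"
proof -
  have "t < k" using assms(3) run_length_le[of j k q] by linarith
  then have "min (a t) (b t) \<le> q t" "q t \<le> a t" "q t < b t"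
    using assms(1,2) run_length_run[OF assms(3)] by auto
  then show ?thesis by linarith
qed

lemma exists_run_witness:
  assumes S: "S \<subseteq> dom_fam k 1 n" and T: "T \<subseteq> dom_fam k 1 n" and P: "prec_fam T S" and j: "1 \<le> j"
    and a: "spaced k a" "a 0 = j" "dominoes k a \<notin> ideal_gen k n T"
    and b: "spaced k b" "b 0 = j + 1" "dominoes k b \<in> ideal_gen k n S"
    and \<sigma>: "\<sigma> \<subseteq> dominoes k a" "\<sigma> \<subseteq> dominoes k b"
  shows "\<exists>q. spaced k q \<and> q 0 = j \<and> dominoes k (shift_run j k q) \<in> ideal_gen k n S
    \<and> dominoes k q \<notin> ideal_gen k n T \<and> \<sigma> \<subseteq> dominoes k q"
proof -
  define C where "C = (\<lambda>q. spaced k q \<and> q 0 = j \<and> (\<forall>t<k. min (a t) (b t) \<le> q t \<and> q t \<le> a t)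
      \<and> \<sigma> \<subseteq> dominoes k q \<and> dominoes k (shift_run j k q) \<in> ideal_gen k n S)"
  have b_lower: "\<forall>t<k. j + 1 + 2 * t \<le> b t" using spaced_lower_bound[OF b(1)] b(2) by simp
  have "C (\<lambda>t. min (a t) (b t))"
    unfolding C_def using spaced_min[OF a(1) b(1)] a(2) b(2) \<sigma> dominoes_min[OF a(1) b(1)]
      shift_run_in_ideal_gen_if_le[OF S spaced_min[OF a(1) b(1)] _ j b(1,3)
        shift_run_le_if_run_below[OF b_lower]]
    by auto
  moreover have "\<forall>q. C q \<longrightarrow> (\<Sum>t<k. q t) < Suc (\<Sum>t<k. a t)"
    unfolding C_def by (metis lessThan_iff le_imp_less_Suc sum_mono)
  ultimately obtain Q where Q: "C Q" and Q_max: "\<And>Q'. C Q' \<Longrightarrow> (\<Sum>t<k. Q' t) \<le> (\<Sum>t<k. Q t)"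
    using ex_has_greatest_nat[of C _ "\<lambda>q. \<Sum>t<k. q t"] by blast
  then have Q_spaced: "spaced k Q" and Q0: "Q 0 = j"
    and Q_le: "\<forall>t<k. min (a t) (b t) \<le> Q t \<and> Q t \<le> a t"
    and Q_\<sigma>: "\<sigma> \<subseteq> dominoes k Q" and Q_shift: "dominoes k (shift_run j k Q) \<in> ideal_gen k n S"
    unfolding C_def by auto
  have "dominoes k Q \<notin> ideal_gen k n T"
  proof
    assume QT: "dominoes k Q \<in> ideal_gen k n T"
    have "\<forall>t<k. Q t \<le> a t" "\<exists>t<k. Q t \<noteq> a t"
      using Q_le QT a(3) dominoes_cong[of k Q a] by (blast, metis)
    then obtain Q' where Q': "spaced k Q'" "\<forall>t<k. Q t \<le> Q' t \<and> Q' t \<le> a t \<and> Q' t \<le> Q t + 1"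
      "\<exists>t<k. Q t < Q' t" "\<forall>t. (\<forall>t'\<le>t. Q t' = a t') \<longrightarrow> Q' t = Q t" "\<sigma> \<subseteq> dominoes k Q'"
      using exists_raise_towards[OF Q_spaced a(1) _ _ Q_\<sigma> \<sigma>(1)] by blast
    have Q'_run: "\<forall>t<run_length j k Q. Q' t = Q t"
      using Q'(4) run_agrees_if_between_min[OF Q_le b_lower] by auto
    have "Q' 0 = j" using Q'(4)[rule_format, of 0] Q0 a(2) by simp
    then have "C Q'"
      using shift_run_in_ideal_gen_if_le[OF S Q'(1) _ j spaced_Suc[OF Q_spaced]
          succ_in_ideal_gen_if_prec_fam[OF S T P Q_spaced QT]
          shift_run_le_Suc_if_agree[OF Q_spaced Q0 _ Q'_run]] Q'(1,2,5) Q_le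
      unfolding C_def by (meson order_trans)
    moreover have "(\<Sum>t<k. Q t) < (\<Sum>t<k. Q' t)"
      using Q'(2,3) by (intro sum_strict_mono_ex1) auto
    ultimately show False using Q_max by (meson leD)
  qed
  then show ?thesis using Q_spaced Q0 Q_shift Q_\<sigma> by blast
qed

lemma mem_Gamma_union_if_mem_Dcx_inter:
  assumes S: "S \<subseteq> dom_fam k 1 n" and T: "T \<subseteq> dom_fam k 1 n" and k: "1 \<le> k"
    and P: "prec_fam T S" and j: "1 \<le> j"
    and "\<sigma> \<in> Dcx k n S T j \<inter> Dcx k n S T (j + 1)"
  shows "\<sigma> \<in> (\<Union>l\<in>{1..k}. join (Gamma k n S T j l) (simplex {j + 1..j + 2 * l - 1}))"
proof -
  obtain a b where
    a: "spaced k a" "a 0 = j" "dominoes k a \<notin> ideal_gen k n T" "\<sigma> \<subseteq> dominoes k a" and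
    b: "spaced k b" "b 0 = j + 1" "dominoes k b \<in> ideal_gen k n S" "\<sigma> \<subseteq> dominoes k b"
    using assms(6) mem_Dcx_iff[OF S T k j] mem_Dcx_iff[OF S T k, of "j + 1"] by auto
  have "j \<notin> \<sigma>" using dominoes_lower_bound[OF b(1)] b(2,4) by fastforce
  then show ?thesis
    using exists_run_witness[OF S T P j a(1-3) b(1-3) a(4) b(4)]
    unfolding mem_Gamma_union_iff[OF S T k j] by blast
qed

lemma mem_Dcx_inter_if_mem_Gamma_union:
  assumes S: "S \<subseteq> dom_fam k 1 n" and T: "T \<subseteq> dom_fam k 1 n" and k: "1 \<le> k" and j: "1 \<le> j"
    and "\<sigma> \<in> (\<Union>l\<in>{1..k}. join (Gamma k n S T j l) (simplex {j + 1..j + 2 * l - 1}))"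
  shows "\<sigma> \<in> Dcx k n S T j \<inter> Dcx k n S T (j + 1)"
proof -
  obtain q where q: "spaced k q" "q 0 = j" "dominoes k (shift_run j k q) \<in> ideal_gen k n S"
    "dominoes k q \<notin> ideal_gen k n T" "\<sigma> \<subseteq> dominoes k q - {j}"
    using assms(5) unfolding mem_Gamma_union_iff[OF S T k j] by blast
  have "dominoes k (shift_run j k q) \<notin> ideal_gen k n T"
    using in_ideal_gen_if_shift_run[OF T q(1,2) j] q(4) by blast
  moreover have "1 \<le> j + 1" by simp
  ultimately show ?thesis
    using q in_ideal_gen_if_shift_run[OF S q(1,2) j q(3)] spaced_shift_run[OF q(1,2)]
      shift_run_0[of q j k, OF q(2) k] dominoes_subset_shift_run[of q j k, OF q(2)]
    unfolding Int_iff mem_Dcx_iff[OF S T k j] mem_Dcx_iff[OF S T k \<open>1 \<le> j + 1\<close>] by blast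
qed

theorem lemma3p9:
  fixes k n j :: nat and S T :: "nat set set"
  assumes "1 \<le> k" and "2 * k \<le> n"
    and "antichain_in k n S" and "antichain_in k n T"
    and "prec_fam T S"
    and "1 \<le> j"
    and "Dcx k n S T (j + 1) \<noteq> {}"
  shows "Dcx k n S T j \<inter> Dcx k n S T (j + 1) =
         (\<Union>l\<in>{1..k}. join (Gamma k n S T j l) (simplex {j + 1..j + 2*l - 1}))"
proof -
  have S: "S \<subseteq> dom_fam k 1 n" and T: "T \<subseteq> dom_fam k 1 n"
    using assms(3,4) unfolding antichain_in_def by auto
  show ?thesis
    using mem_Gamma_union_if_mem_Dcx_inter[OF S T assms(1,5,6)]
      mem_Dcx_inter_if_mem_Gamma_union[OF S T assms(1,6)] by blast
qed

end
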